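(* Let $V$ be a finite-dimensional real Hilbert space with inner product $\langle\cdot,\cdot\rangle$, let $M\subset V$ be a convex open subset, and let $f\in C^1(M,V)$ satisfy (i) there exists $A_0\in M$ such that the Fréchet derivative $Df[A_0]$ is positive definite; (ii) for every $A\in M$, $Df[A]$ is invertible and self-adjoint. Then $\langle Df[A].H,\,H\rangle>0$ for all $A\in M$ and all $H\in V\setminus\{0\}$, and consequently $f$ is strictly monotone on $M$, i.e. $\langle f(A)-f(B),\,A-B\rangle>0$ for all $A\neq B$ in $M$.
   Context: $Df[A]\in L(V,V)$ denotes the Fréchet derivative of $f$ at $A$; it is positive definite if $\langle Df[A].H,H\rangle>0$ for all $H\neq 0$. *)

theory Defs
  imports "HOL-Analysis.Analysis"
begin

end

theory Submission imports Defs begin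

text \<open>Positive definiteness is an open condition on the derivative, and by invertibility
together with self-adjointness its failure is also open (a positive semidefinite injective
self-adjoint operator is positive definite, so failing means having a negative direction).
Hence the positive-definite locus is clopen in the connected set \<open>M\<close> and nonempty, so it is
all of \<open>M\<close>. Strict monotonicity then follows from the mean value theorem along segments.\<close>

definition positive_definite :: "('a::real_inner \<Rightarrow> 'a) \<Rightarrow> bool" where
  "positive_definite T \<longleftrightarrow> (\<forall>H. H \<noteq> 0 \<longrightarrow> inner (T H) H > 0)"

lemma selfadjoint_psd_inj_imp_positive_definite:
  fixes T :: "'a::real_inner \<Rightarrow> 'a"
  assumes lin: "linear T" and sa: "\<And>x y. inner (T x) y = inner x (T y)"
    and psd: "\<And>H. inner (T H) H \<ge> 0" and inj: "inj T"
  shows "positive_definite T"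
  unfolding positive_definite_def
proof (intro allI impI)
  fix x :: 'a assume x: "x \<noteq> 0"
  show "inner (T x) x > 0"
  proof (rule ccontr)
    assume "\<not> inner (T x) x > 0"
    then have x0: "inner (T x) x = 0" using psd[of x] by linarith
    define a where "a = inner (T x) (T x)"
    define b where "b = inner (T (T x)) (T x)"
    have b0: "b \<ge> 0" unfolding b_def by (rule psd)
    text \<open>The quadratic form along the line \<open>x + t T x\<close> is \<open>2 t a + t\<^sup>2 b\<close>, which changes
      sign near \<open>t = 0\<close> unless \<open>a = 0\<close>.\<close>
    have line: "0 \<le> 2 * t * a + t\<^sup>2 * b" for t
    proof -
      have "0 \<le> inner (T (x + t *\<^sub>R T x)) (x + t *\<^sub>R T x)" by (rule psd)
      also have "\<dots> = inner (T x) x + t * inner (T x) (T x) + t * inner (T (T x)) x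
          + t\<^sup>2 * inner (T (T x)) (T x)"
        by (simp add: linear_add[OF lin] linear_scale[OF lin] inner_add_left inner_add_right
            power2_eq_square algebra_simps)
      also have "inner (T (T x)) x = inner (T x) (T x)" using sa by (metis inner_commute)
      finally show ?thesis using x0 a_def b_def by (simp add: algebra_simps)
    qed
    have "a = 0"
    proof (rule ccontr)
      assume a: "a \<noteq> 0"
      have "2 * (-a / (b + 1)) * a + (-a / (b + 1))\<^sup>2 * b = a\<^sup>2 * (- b - 2) / (b + 1)\<^sup>2"
        using b0 by (simp add: power2_eq_square divide_simps) algebra
      moreover have "a\<^sup>2 * (- b - 2) / (b + 1)\<^sup>2 < 0"
        using a b0 by (simp add: divide_neg_pos mult_pos_neg)
      ultimately show False using line[of "-a / (b + 1)"] by linarith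
    qed
    then have "T x = T 0" using linear_0[OF lin] a_def by simp
    then show False using inj x by (metis injD)
  qed
qed

lemma positive_definite_nonneg:
  assumes "linear T" and "positive_definite T"
  shows "0 \<le> inner (T H) H"
  using assms by (cases "H = 0") (auto simp: positive_definite_def linear_0 less_imp_le)

lemma selfadjoint_inj_positive_definite_or_negative:
  fixes T :: "'a::real_inner \<Rightarrow> 'a"
  assumes "linear T" and "\<And>x y. inner (T x) y = inner x (T y)" and "inj T"
  shows "positive_definite T \<or> (\<exists>H. inner (T H) H < 0)"
  using selfadjoint_psd_inj_imp_positive_definite[OF assms(1,2) _ assms(3)] by (meson not_less)

lemma positive_definite_quadratic_lower_bound:
  fixes T :: "'a::euclidean_space \<Rightarrow> 'a"
  assumes lin: "bounded_linear T" and pd: "positive_definite T"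
  obtains c where "c > 0" "\<And>H. c * (norm H)\<^sup>2 \<le> inner (T H) H"
proof -
  have cont: "continuous_on (sphere 0 1) (\<lambda>H. inner (T H) H)"
    using continuous_on_inner[OF linear_continuous_on[OF lin] continuous_on_id] .
  then obtain H0 where H0: "H0 \<in> sphere 0 1"
    and min: "\<And>u. u \<in> sphere 0 1 \<Longrightarrow> inner (T H0) H0 \<le> inner (T u) u"
    using continuous_attains_inf[OF compact_sphere _ cont] by fastforce
  have "inner (T H0) H0 > 0"
    using H0 pd unfolding positive_definite_def by (metis mem_sphere_0 norm_zero zero_neq_one)
  moreover have "inner (T H0) H0 * (norm H)\<^sup>2 \<le> inner (T H) H" for H
  proof (cases "H = 0")
    case True
    then show ?thesis using lin by (simp add: linear_simps)
  next
    case False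
    then have "inner (T H0) H0 \<le> inner (T (H /\<^sub>R norm H)) (H /\<^sub>R norm H)"
      by (intro min) simp
    also have "\<dots> = inner (T H) H / (norm H)\<^sup>2"
      using False by (simp add: linear_simps[OF lin] power2_eq_square field_simps)
    finally show ?thesis using False by (simp add: field_simps)
  qed
  ultimately show thesis using that by blast
qed

lemma blinfun_quadratic_form_bound:
  fixes T :: "'a::real_inner \<Rightarrow>\<^sub>L 'a"
  shows "\<bar>inner (T H) H\<bar> \<le> norm T * (norm H)\<^sup>2"
proof -
  have "\<bar>inner (T H) H\<bar> \<le> norm (T H) * norm H" by (rule Cauchy_Schwarz_ineq2)
  also have "\<dots> \<le> norm T * norm H * norm H" by (simp add: mult_right_mono norm_blinfun)
  finally show ?thesis by (simp add: power2_eq_square mult.assoc)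
qed

lemma positive_definite_near:
  fixes S T :: "'a::real_inner \<Rightarrow>\<^sub>L 'a"
  assumes bound: "\<And>H. c * (norm H)\<^sup>2 \<le> inner (T H) H" and near: "dist S T < c"
  shows "positive_definite (blinfun_apply S)"
  unfolding positive_definite_def
proof (intro allI impI)
  fix H :: 'a assume "H \<noteq> 0"
  have "\<bar>inner ((S - T) H) H\<bar> \<le> norm (S - T) * (norm H)\<^sup>2" by (rule blinfun_quadratic_form_bound)
  also have "\<dots> < c * (norm H)\<^sup>2" using near \<open>H \<noteq> 0\<close> by (simp add: dist_norm)
  finally show "inner (S H) H > 0"
    using bound[of H] by (simp add: minus_blinfun.rep_eq inner_diff_left)
qed

lemma open_positive_definite_locus:
  fixes Df :: "'a::euclidean_space \<Rightarrow> ('a \<Rightarrow>\<^sub>L 'a)"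
  assumes "open M" and cont: "continuous_on M Df"
  shows "open {A \<in> M. positive_definite (blinfun_apply (Df A))}" (is "open ?P")
proof (subst open_subopen, intro ballI)
  fix A assume A: "A \<in> ?P"
  then obtain c where c: "c > 0" "\<And>H. c * (norm H)\<^sup>2 \<le> inner (Df A H) H"
    by (auto intro: positive_definite_quadratic_lower_bound[OF blinfun.bounded_linear_right])
  have "open (M \<inter> Df -` ball (Df A) c)"
    using continuous_open_preimage[OF cont \<open>open M\<close>] by blast
  moreover have "M \<inter> Df -` ball (Df A) c \<subseteq> ?P"
    using positive_definite_near[OF c(2)] by (auto simp: dist_commute)
  ultimately show "\<exists>U. open U \<and> A \<in> U \<and> U \<subseteq> ?P" using A c(1) by auto
qed

lemma open_indefinite_locus:
  fixes Df :: "'a::real_inner \<Rightarrow> ('a \<Rightarrow>\<^sub>L 'a)"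
  assumes "open M" and cont: "continuous_on M Df"
  shows "open {A \<in> M. \<exists>H. inner (Df A H) H < 0}"
proof -
  have "continuous_on M (\<lambda>B. inner (Df B H) H)" for H
    using bounded_bilinear.continuous_on[OF bounded_bilinear_blinfun_apply cont continuous_on_const]
    by (intro continuous_on_inner continuous_on_const)
  then have open_H: "open (M \<inter> (\<lambda>B. inner (Df B H) H) -` {..<0})" for H
    using continuous_open_preimage[OF _ \<open>open M\<close> open_lessThan] by blast
  have "{A \<in> M. \<exists>H. inner (Df A H) H < 0} = (\<Union>H. M \<inter> (\<lambda>B. inner (Df B H) H) -` {..<0})"
    by auto
  then show ?thesis by (simp only:) (intro open_UN ballI open_H)
qed

lemma connected_open_cover_cases:
  assumes "connected M" "open P" "open N" "M \<subseteq> P \<union> N" "P \<inter> N \<inter> M = {}" "P \<inter> M \<noteq> {}"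
  shows "M \<subseteq> P"
  using assms unfolding connected_def by blast

lemma positive_definite_on_connected:
  fixes Df :: "'a::euclidean_space \<Rightarrow> ('a \<Rightarrow>\<^sub>L 'a)"
  assumes "connected M" and "open M" and cont: "continuous_on M Df"
    and sa: "\<And>A x y. A \<in> M \<Longrightarrow> inner (Df A x) y = inner x (Df A y)"
    and inj: "\<And>A. A \<in> M \<Longrightarrow> inj (blinfun_apply (Df A))"
    and "A0 \<in> M" and "positive_definite (blinfun_apply (Df A0))"
    and "A \<in> M"
  shows "positive_definite (blinfun_apply (Df A))"
proof -
  let ?P = "{A \<in> M. positive_definite (blinfun_apply (Df A))}"
  let ?N = "{A \<in> M. \<exists>H. inner (Df A H) H < 0}"
  note lin = blinfun.bounded_linear_right[THEN bounded_linear.linear]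
  have "M \<subseteq> ?P \<union> ?N"
    using selfadjoint_inj_positive_definite_or_negative[OF lin sa inj] by blast
  moreover have "?P \<inter> ?N \<inter> M = {}"
    using positive_definite_nonneg[OF lin] by (force simp: not_less[symmetric])
  moreover have "?P \<inter> M \<noteq> {}"
    using assms(6,7) by blast
  ultimately have "M \<subseteq> ?P"
    by (rule connected_open_cover_cases[OF \<open>connected M\<close>
          open_positive_definite_locus[OF \<open>open M\<close> cont] open_indefinite_locus[OF \<open>open M\<close> cont]])
  with \<open>A \<in> M\<close> show ?thesis by blast
qed

lemma strictly_monotone_if_positive_definite_derivative:
  fixes f :: "'a::real_inner \<Rightarrow> 'a"
  assumes "convex M"
    and deriv: "\<And>A. A \<in> M \<Longrightarrow> (f has_derivative f' A) (at A)"
    and pd: "\<And>A. A \<in> M \<Longrightarrow> positive_definite (f' A)"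
    and A: "A \<in> M" and B: "B \<in> M" and "A \<noteq> B"
  shows "inner (f A - f B) (A - B) > 0"
proof -
  define p where "p = (\<lambda>t::real. B + t *\<^sub>R (A - B))"
  have pM: "p t \<in> M" if "0 \<le> t" "t \<le> 1" for t
    using convexD[OF \<open>convex M\<close> A B, of t "1 - t"] that by (simp add: p_def algebra_simps)
  define \<phi> where "\<phi> = (\<lambda>t. inner (f (p t)) (A - B))"
  have "DERIV \<phi> t :> inner (f' (p t) (A - B)) (A - B)" if "0 \<le> t" "t \<le> 1" for t
  proof -
    have lin: "linear (f' (p t))"
      using deriv[OF pM[OF that]] by (rule has_derivative_linear)
    have "(p has_derivative (\<lambda>s. s *\<^sub>R (A - B))) (at t)"
      unfolding p_def by (auto intro!: derivative_eq_intros)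
    from has_derivative_compose[OF this deriv[OF pM[OF that]]]
    have "(\<phi> has_derivative (\<lambda>s. inner (f' (p t) (s *\<^sub>R (A - B))) (A - B))) (at t)"
      unfolding \<phi>_def by (rule has_derivative_inner_left)
    moreover have "(\<lambda>s. inner (f' (p t) (s *\<^sub>R (A - B))) (A - B))
        = (*) (inner (f' (p t) (A - B)) (A - B))"
      by (simp add: fun_eq_iff linear_scale[OF lin])
    ultimately show ?thesis by (simp only: has_field_derivative_def)
  qed
  then obtain z where z: "0 < z" "z < 1"
    and mvt: "\<phi> 1 - \<phi> 0 = (1 - 0) * inner (f' (p z) (A - B)) (A - B)"
    using MVT2[of 0 1 \<phi> "\<lambda>t. inner (f' (p t) (A - B)) (A - B)"] by auto
  have "inner (f' (p z) (A - B)) (A - B) > 0"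
    using pd[OF pM] z \<open>A \<noteq> B\<close> unfolding positive_definite_def by simp
  moreover have "\<phi> 1 - \<phi> 0 = inner (f A - f B) (A - B)"
    by (simp add: \<phi>_def p_def inner_diff_left)
  ultimately show ?thesis using mvt by simp
qed

theorem lemma1p1:
  fixes f :: "'a::euclidean_space \<Rightarrow> 'a"
    and Df :: "'a \<Rightarrow> ('a \<Rightarrow>\<^sub>L 'a)"
    and M :: "'a set"
  assumes "convex M" and "open M"
    and deriv: "\<And>A. A \<in> M \<Longrightarrow> (f has_derivative blinfun_apply (Df A)) (at A)"
    and cont: "continuous_on M Df"
    and pd0: "\<exists>A0\<in>M. \<forall>H. H \<noteq> 0 \<longrightarrow> inner (Df A0 H) H > 0"
    and inv: "\<And>A. A \<in> M \<Longrightarrow> bij (blinfun_apply (Df A))"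
    and sa: "\<And>A x y. A \<in> M \<Longrightarrow> inner (Df A x) y = inner x (Df A y)"
  shows "(\<forall>A\<in>M. \<forall>H. H \<noteq> 0 \<longrightarrow> inner (Df A H) H > 0)
    \<and> (\<forall>A\<in>M. \<forall>B\<in>M. A \<noteq> B \<longrightarrow> inner (f A - f B) (A - B) > 0)"
proof -
  obtain A0 where "A0 \<in> M" "positive_definite (blinfun_apply (Df A0))"
    using pd0 by (auto simp: positive_definite_def)
  then have pd: "\<And>A. A \<in> M \<Longrightarrow> positive_definite (blinfun_apply (Df A))"
    using positive_definite_on_connected[OF convex_connected[OF \<open>convex M\<close>] \<open>open M\<close> cont sa
        bij_is_inj[OF inv]] by blast
  have "\<forall>A\<in>M. \<forall>B\<in>M. A \<noteq> B \<longrightarrow> inner (f A - f B) (A - B) > 0"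
    using strictly_monotone_if_positive_definite_derivative[OF \<open>convex M\<close> deriv pd] by blast
  with pd show ?thesis by (simp add: positive_definite_def)
qed

end
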